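(* Let $G$ be a DAG and $k,r,L$ positive integers. Suppose that every SPP pebbling strategy of $G$ with fast memory of size $k\cdot r$ uses at least $L$ I/O operations. Then every MPP pebbling strategy of $G$ with $k$ processors, each having fast memory of size $r$, contains at least $L/k$ I/O steps (applications of rules (R1) and (R2)).
   Context: Single-processor red-blue pebbling (SPP) with fast memory size $r$ on a DAG $G=(V,E)$: a state is a pair $(R,B)$ of subsets of $V$ (red and blue pebbles), starting with both empty. Rules: (R1-S) place a red pebble on a node carrying a blue pebble; (R2-S) place a blue pebble on a node carrying a red pebble; (R3-S) place a red pebble on a node all of whose in-neighbors carry red pebbles (in particular on any source); (R4-S) remove any pebble. At all times $|R|\le r$; a strategy must end in a state where every sink carries a pebble. Its I/O cost is the number of applications of (R1-S) and (R2-S). Multiprocessor red-blue pebbling (MPP). Input: a DAG $G=(V,E)$ with $n=|V|$ and positive integers $k$ (number of processors), $r$ (fast-memory size per processor), $g$ (cost of an I/O step). $\Delta_{in}$ denotes the maximum in-degree of $G$; sources/sinks are nodes of in-degree/out-degree $0$. A configuration is a tuple $(R^1,\dots,R^k,B)$ of subsets of $V$ ($R^j$ = nodes carrying a red pebble of processor $j$, $B$ = nodes carrying a blue pebble); it is valid if $|R^j|\le r$ for all $j$. The initial configuration has all sets empty; a configuration is terminal if every sink lies in $B\cup\bigcup_j R^j$. The transition rules are: (R1) for some $m\le k$, pairwise distinct processors $j_1,\dots,j_m$ and nodes $v_1,\dots,v_m$ with $v_i\in R^{j_i}$, add each $v_i$ to $B$ (cost $g$); (R2) for some $m\le k$, pairwise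 distinct processors $j_1,\dots,j_m$ and nodes $v_1,\dots,v_m\in B$, add each $v_i$ to $R^{j_i}$ (cost $g$); (R3) for some $m\le k$, pairwise distinct processors $j_1,\dots,j_m$ and nodes $v_1,\dots,v_m$ such that every in-neighbor of $v_i$ lies in $R^{j_i}$, add each $v_i$ to $R^{j_i}$ (cost $1$); (R4) remove a single red or blue pebble (cost $0$). A pebbling strategy is a sequence of valid configurations starting at the initial configuration and ending at a terminal one, each obtained from its predecessor by one rule; its cost is the sum of the costs of the rules applied. $\mathrm{OPT}$ denotes the minimum cost of a pebbling strategy. Applications of (R1),(R2) are called I/O steps and applications of (R3) compute steps. *)

theory Defs
  imports Complex_Main
begin

definition is_dag :: "'v set \<Rightarrow> ('v \<times> 'v) set \<Rightarrow> bool" where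
  "is_dag V E \<longleftrightarrow> finite V \<and> E \<subseteq> V \<times> V \<and> acyclic E"

definition in_nbrs :: "('v \<times> 'v) set \<Rightarrow> 'v \<Rightarrow> 'v set" where
  "in_nbrs E v = {u. (u, v) \<in> E}"

definition sinks :: "'v set \<Rightarrow> ('v \<times> 'v) set \<Rightarrow> 'v set" where
  "sinks V E = {v \<in> V. \<forall>w. (v, w) \<notin> E}"

datatype 'v spp_move =
    SLoad 'v
  | SStore 'v
  | SCompute 'v
  | SRemRed 'v
  | SRemBlue 'v

fun spp_applicable :: "'v set \<Rightarrow> ('v \<times> 'v) set \<Rightarrow> 'v spp_move \<Rightarrow> 'v set \<times> 'v set \<Rightarrow> bool" where
  "spp_applicable V E (SLoad v) (R, B) = (v \<in> B)"
| "spp_applicable V E (SStore v) (R, B) = (v \<in> R)"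
| "spp_applicable V E (SCompute v) (R, B) = (v \<in> V \<and> in_nbrs E v \<subseteq> R)"
| "spp_applicable V E (SRemRed v) (R, B) = (v \<in> R)"
| "spp_applicable V E (SRemBlue v) (R, B) = (v \<in> B)"

fun spp_effect :: "'v spp_move \<Rightarrow> 'v set \<times> 'v set \<Rightarrow> 'v set \<times> 'v set" where
  "spp_effect (SLoad v) (R, B) = (insert v R, B)"
| "spp_effect (SStore v) (R, B) = (R, insert v B)"
| "spp_effect (SCompute v) (R, B) = (insert v R, B)"
| "spp_effect (SRemRed v) (R, B) = (R - {v}, B)"
| "spp_effect (SRemBlue v) (R, B) = (R, B - {v})"

definition spp_terminal :: "'v set \<Rightarrow> ('v \<times> 'v) set \<Rightarrow> 'v set \<times> 'v set \<Rightarrow> bool" where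
  "spp_terminal V E s \<longleftrightarrow> sinks V E \<subseteq> fst s \<union> snd s"

fun spp_run :: "'v set \<Rightarrow> ('v \<times> 'v) set \<Rightarrow> nat \<Rightarrow> 'v spp_move list \<Rightarrow> 'v set \<times> 'v set \<Rightarrow> bool" where
  "spp_run V E r [] s = spp_terminal V E s"
| "spp_run V E r (m # ms) s =
     (spp_applicable V E m s \<and> card (fst (spp_effect m s)) \<le> r
      \<and> spp_run V E r ms (spp_effect m s))"

definition spp_strategy :: "'v set \<Rightarrow> ('v \<times> 'v) set \<Rightarrow> nat \<Rightarrow> 'v spp_move list \<Rightarrow> bool" where
  "spp_strategy V E r ms \<longleftrightarrow> spp_run V E r ms ({}, {})"

fun spp_is_io :: "'v spp_move \<Rightarrow> bool" where
  "spp_is_io (SLoad v) = True"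
| "spp_is_io (SStore v) = True"
| "spp_is_io _ = False"

definition spp_io_cost :: "'v spp_move list \<Rightarrow> nat" where
  "spp_io_cost ms = length (filter spp_is_io ms)"

text \<open>Processors are indexed 0..<k. A configuration is (Rs, B) where Rs j is the
  red set of processor j (only j < k is meaningful).\<close>

type_synonym 'v mconf = "(nat \<Rightarrow> 'v set) \<times> 'v set"

datatype 'v mpp_move =
    MStore "(nat \<times> 'v) list"    \<comment> \<open>(R1): red of processor j to blue\<close>
  | MLoad "(nat \<times> 'v) list"     \<comment> \<open>(R2): blue to red of processor j\<close>
  | MCompute "(nat \<times> 'v) list"
  | MRemRed nat 'v
  | MRemBlue 'v

definition procs_ok :: "nat \<Rightarrow> (nat \<times> 'v) list \<Rightarrow> bool" where
  "procs_ok k ps \<longleftrightarrow> length ps \<le> k \<and> distinct (map fst ps) \<and> (\<forall>(j, v) \<in> set ps. j < k)"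

fun mpp_applicable :: "'v set \<Rightarrow> ('v \<times> 'v) set \<Rightarrow> nat \<Rightarrow> 'v mpp_move \<Rightarrow> 'v mconf \<Rightarrow> bool" where
  "mpp_applicable V E k (MStore ps) (Rs, B) =
     (procs_ok k ps \<and> (\<forall>(j, v) \<in> set ps. v \<in> Rs j))"
| "mpp_applicable V E k (MLoad ps) (Rs, B) =
     (procs_ok k ps \<and> (\<forall>(j, v) \<in> set ps. v \<in> B))"
| "mpp_applicable V E k (MCompute ps) (Rs, B) =
     (procs_ok k ps \<and> (\<forall>(j, v) \<in> set ps. v \<in> V \<and> in_nbrs E v \<subseteq> Rs j))"
| "mpp_applicable V E k (MRemRed j v) (Rs, B) = (j < k \<and> v \<in> Rs j)"
| "mpp_applicable V E k (MRemBlue v) (Rs, B) = (v \<in> B)"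

fun mpp_effect :: "'v mpp_move \<Rightarrow> 'v mconf \<Rightarrow> 'v mconf" where
  "mpp_effect (MStore ps) (Rs, B) = (Rs, B \<union> snd ` set ps)"
| "mpp_effect (MLoad ps) (Rs, B) = ((\<lambda>j. Rs j \<union> {v. (j, v) \<in> set ps}), B)"
| "mpp_effect (MCompute ps) (Rs, B) = ((\<lambda>j. Rs j \<union> {v. (j, v) \<in> set ps}), B)"
| "mpp_effect (MRemRed j v) (Rs, B) = (Rs(j := Rs j - {v}), B)"
| "mpp_effect (MRemBlue v) (Rs, B) = (Rs, B - {v})"

definition mpp_valid :: "nat \<Rightarrow> nat \<Rightarrow> 'v mconf \<Rightarrow> bool" where
  "mpp_valid k r c \<longleftrightarrow> (\<forall>j < k. card (fst c j) \<le> r)"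

definition mpp_terminal :: "'v set \<Rightarrow> ('v \<times> 'v) set \<Rightarrow> nat \<Rightarrow> 'v mconf \<Rightarrow> bool" where
  "mpp_terminal V E k c \<longleftrightarrow> sinks V E \<subseteq> snd c \<union> (\<Union>j < k. fst c j)"

fun mpp_run :: "'v set \<Rightarrow> ('v \<times> 'v) set \<Rightarrow> nat \<Rightarrow> nat \<Rightarrow> 'v mpp_move list \<Rightarrow> 'v mconf \<Rightarrow> bool" where
  "mpp_run V E k r [] c = mpp_terminal V E k c"
| "mpp_run V E k r (m # ms) c =
     (mpp_applicable V E k m c \<and> mpp_valid k r (mpp_effect m c)
      \<and> mpp_run V E k r ms (mpp_effect m c))"

definition mpp_strategy :: "'v set \<Rightarrow> ('v \<times> 'v) set \<Rightarrow> nat \<Rightarrow> nat \<Rightarrow> 'v mpp_move list \<Rightarrow> bool" where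
  "mpp_strategy V E k r ms \<longleftrightarrow> mpp_run V E k r ms ((\<lambda>_. {}), {})"

fun mpp_is_io :: "'v mpp_move \<Rightarrow> bool" where
  "mpp_is_io (MStore ps) = True"
| "mpp_is_io (MLoad ps) = True"
| "mpp_is_io _ = False"

definition mpp_io_steps :: "'v mpp_move list \<Rightarrow> nat" where
  "mpp_io_steps ms = length (filter mpp_is_io ms)"

end

theory Submission
  imports Defs
begin

text \<open>Merging the fast memories of the k processors into a single fast memory of size k\<cdot>r
  turns every MPP strategy into an SPP strategy: the union of the red sets stays within k\<cdot>r,
  and one parallel I/O step, touching at most one node per processor, becomes at most k
  sequential I/O operations. Hence L \<le> k times the number of MPP I/O steps.\<close>

definition red_union :: "nat \<Rightarrow> (nat \<Rightarrow> 'v set) \<Rightarrow> 'v set" where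
  "red_union k Rs = (\<Union>j<k. Rs j)"

definition merge_conf :: "nat \<Rightarrow> 'v mconf \<Rightarrow> 'v set \<times> 'v set" where
  "merge_conf k c = (red_union k (fst c), snd c)"

fun spp_path :: "'v set \<Rightarrow> ('v \<times> 'v) set \<Rightarrow> nat \<Rightarrow> 'v spp_move list
    \<Rightarrow> 'v set \<times> 'v set \<Rightarrow> 'v set \<times> 'v set \<Rightarrow> bool" where
  "spp_path V E b [] s t \<longleftrightarrow> s = t"
| "spp_path V E b (m # ms) s t \<longleftrightarrow>
     spp_applicable V E m s \<and> card (fst (spp_effect m s)) \<le> b \<and> spp_path V E b ms (spp_effect m s) t"

lemma spp_path_append_run:
  "spp_path V E b ms s t \<Longrightarrow> spp_run V E b ts t \<Longrightarrow> spp_run V E b (ms @ ts) s"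
  by (induction ms arbitrary: s) auto

lemma spp_path_insert_nodes:
  assumes app: "\<And>v R'. v \<in> set vs \<Longrightarrow> R \<subseteq> R' \<Longrightarrow> spp_applicable V E (f v) (R', B)"
    and eff: "\<And>v R'. spp_effect (f v) (R', B) = (insert v R', B)"
    and F: "finite F" "card F \<le> b" "R \<union> set vs \<subseteq> F"
  shows "spp_path V E b (map f vs) (R, B) (R \<union> set vs, B)"
  using app F(3)
proof (induction vs arbitrary: R)
  case Nil
  then show ?case by simp
next
  case (Cons v vs)
  have "card (insert v R) \<le> card F"
    using Cons.prems(2) by (intro card_mono[OF F(1)]) auto
  then have "card (insert v R) \<le> b"
    using F(2) by linarith
  moreover have "spp_path V E b (map f vs) (insert v R, B) (insert v R \<union> set vs, B)"
    using Cons.prems by (intro Cons.IH) auto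
  ultimately show ?case
    using Cons.prems(1)[of v R] eff by simp
qed

lemma spp_path_store_nodes:
  "set vs \<subseteq> R \<Longrightarrow> card R \<le> b \<Longrightarrow> spp_path V E b (map SStore vs) (R, B) (R, B \<union> set vs)"
proof (induction vs arbitrary: B)
  case (Cons v vs)
  then show ?case
    using Cons.IH[of "insert v B"] by simp
qed simp

lemma spp_io_cost_map_SCompute: "spp_io_cost (map SCompute xs) = 0"
  unfolding spp_io_cost_def by (induction xs) auto

lemma card_red_union_le:
  assumes "\<And>j. j < k \<Longrightarrow> finite (Rs j)" "\<And>j. j < k \<Longrightarrow> card (Rs j) \<le> r"
  shows "card (red_union k Rs) \<le> k * r"
proof -
  have "card (red_union k Rs) \<le> (\<Sum>j<k. card (Rs j))"
    unfolding red_union_def by (rule card_UN_le) simp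
  also have "\<dots> \<le> k * r"
    using sum_bounded_above[of "{..<k}" "\<lambda>j. card (Rs j)" r] assms by simp
  finally show ?thesis .
qed

lemma red_union_add_pairs:
  "\<forall>(j, v) \<in> set ps. j < k \<Longrightarrow>
   red_union k (\<lambda>j. Rs j \<union> {v. (j, v) \<in> set ps}) = red_union k Rs \<union> set (map snd ps)"
  unfolding red_union_def by force

lemma finite_red_mpp_effect:
  "\<forall>j<k. finite (fst c j) \<Longrightarrow> \<forall>j<k. finite (fst (mpp_effect m c) j)"
proof -
  have "finite {v. (j, v) \<in> set ps}" for j :: nat and ps :: "(nat \<times> 'v) list"
    by (rule finite_subset[of _ "snd ` set ps"]) force+
  then show "\<forall>j<k. finite (fst c j) \<Longrightarrow> \<forall>j<k. finite (fst (mpp_effect m c) j)"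
    by (cases c; cases m) auto
qed

lemma procs_okD:
  assumes "procs_ok k ps"
  shows "length ps \<le> k" and "\<forall>(j, v) \<in> set ps. j < k"
  using assms unfolding procs_ok_def by auto

lemma spp_io_cost_map_procs_le:
  "procs_ok k ps \<Longrightarrow> spp_io_cost (map (f \<circ> snd) ps) \<le> k"
  unfolding spp_io_cost_def using length_filter_le procs_okD(1) by (metis length_map order_trans)

lemma spp_path_merge_remove_red:
  assumes "j < k" "v \<in> Rs j" "card (red_union k (Rs(j := Rs j - {v}))) \<le> b"
  obtains seg where
    "spp_path V E b seg (red_union k Rs, B) (red_union k (Rs(j := Rs j - {v})), B)"
    and "spp_io_cost seg = 0"
proof (cases "v \<in> red_union k (Rs(j := Rs j - {v}))")
  case True
  then have "red_union k (Rs(j := Rs j - {v})) = red_union k Rs"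
    using assms(1,2) unfolding red_union_def by (auto split: if_splits)
  then show thesis
    using that[of "[]"] by (simp add: spp_io_cost_def)
next
  case False
  then have "red_union k (Rs(j := Rs j - {v})) = red_union k Rs - {v}"
    unfolding red_union_def by (auto split: if_splits)
  moreover have "v \<in> red_union k Rs"
    using assms(1,2) unfolding red_union_def by auto
  ultimately show thesis
    using that[of "[SRemRed v]"] assms(3) by (simp add: spp_io_cost_def)
qed

lemma spp_path_merge_store:
  assumes "procs_ok k ps" "\<forall>(j, v) \<in> set ps. v \<in> Rs j" "card (red_union k Rs) \<le> b"
  shows "spp_path V E b (map (SStore \<circ> snd) ps) (red_union k Rs, B) (red_union k Rs, B \<union> snd ` set ps)"
proof -
  have "set (map snd ps) \<subseteq> red_union k Rs"
    using assms(1,2) unfolding procs_ok_def red_union_def by force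
  from spp_path_store_nodes[OF this assms(3)] show ?thesis
    by simp
qed

lemma spp_path_merge_add_pairs:
  assumes ok: "procs_ok k ps"
    and app: "\<And>v R'. v \<in> snd ` set ps \<Longrightarrow> red_union k Rs \<subseteq> R' \<Longrightarrow> spp_applicable V E (f v) (R', B)"
    and eff: "\<And>v R'. spp_effect (f v) (R', B) = (insert v R', B)"
    and fin: "finite (red_union k Rs')" "card (red_union k Rs') \<le> b"
    and Rs': "Rs' = (\<lambda>j. Rs j \<union> {v. (j, v) \<in> set ps})"
  shows "spp_path V E b (map (f \<circ> snd) ps) (red_union k Rs, B) (red_union k Rs', B)"
proof -
  have U': "red_union k Rs' = red_union k Rs \<union> set (map snd ps)"
    using Rs' procs_okD(2)[OF ok] by (simp add: red_union_add_pairs)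
  have "spp_path V E b (map f (map snd ps)) (red_union k Rs, B) (red_union k Rs \<union> set (map snd ps), B)"
    using app eff fin U' by (intro spp_path_insert_nodes[where F = "red_union k Rs'"]) auto
  with U' show ?thesis by simp
qed

lemma spp_path_merge_mpp_move:
  assumes app: "mpp_applicable V E k m c" and val: "mpp_valid k r (mpp_effect m c)"
    and fin: "\<forall>j<k. finite (fst c j)"
  obtains seg where "spp_path V E (k * r) seg (merge_conf k c) (merge_conf k (mpp_effect m c))"
    and "spp_io_cost seg \<le> (if mpp_is_io m then k else 0)"
proof -
  obtain Rs B where c: "c = (Rs, B)" by (cases c)
  have fin': "\<forall>j<k. finite (fst (mpp_effect m c) j)"
    using fin by (rule finite_red_mpp_effect)
  then have U'_finite: "finite (red_union k (fst (mpp_effect m c)))"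
    unfolding red_union_def by auto
  from fin' val have U'_bound: "card (red_union k (fst (mpp_effect m c))) \<le> k * r"
    by (intro card_red_union_le) (auto simp: mpp_valid_def)
  show thesis
  proof (cases m)
    case (MStore ps)
    with app c U'_bound have "procs_ok k ps"
      and "spp_path V E (k * r) (map (SStore \<circ> snd) ps) (red_union k Rs, B) (red_union k Rs, B \<union> snd ` set ps)"
      by (auto intro: spp_path_merge_store)
    with spp_io_cost_map_procs_le show thesis
      using c MStore by (intro that[of "map (SStore \<circ> snd) ps"]) (simp_all add: merge_conf_def)
  next
    case (MLoad ps)
    with app c have "procs_ok k ps" by simp
    moreover have "spp_path V E (k * r) (map (SLoad \<circ> snd) ps) (red_union k Rs, B) (red_union k (fst (mpp_effect m c)), B)"
      using calculation app c MLoad U'_finite U'_bound by (intro spp_path_merge_add_pairs) auto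
    ultimately show thesis
      using spp_io_cost_map_procs_le c MLoad by (intro that[of "map (SLoad \<circ> snd) ps"]) (simp_all add: merge_conf_def)
  next
    case (MCompute ps)
    with app c have ok: "procs_ok k ps"
      and computable: "\<forall>(j, v) \<in> set ps. v \<in> V \<and> in_nbrs E v \<subseteq> Rs j" by auto
    have "\<forall>v \<in> snd ` set ps. v \<in> V \<and> in_nbrs E v \<subseteq> red_union k Rs"
      using computable procs_okD(2)[OF ok] unfolding red_union_def by fastforce
    then have "spp_path V E (k * r) (map (SCompute \<circ> snd) ps) (red_union k Rs, B) (red_union k (fst (mpp_effect m c)), B)"
      using ok c MCompute U'_finite U'_bound by (intro spp_path_merge_add_pairs) fastforce+
    moreover have "spp_io_cost (map (SCompute \<circ> snd) ps) = 0"
      using spp_io_cost_map_SCompute[of "map snd ps"] by simp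
    ultimately show thesis
      using c MCompute by (intro that[of "map (SCompute \<circ> snd) ps"]) (simp_all add: merge_conf_def)
  next
    case (MRemRed j v)
    with app c U'_bound obtain seg where
      "spp_path V E (k * r) seg (red_union k Rs, B) (red_union k (Rs(j := Rs j - {v})), B)"
      "spp_io_cost seg = 0"
      by (auto elim: spp_path_merge_remove_red)
    then show thesis
      using that c MRemRed by (simp add: merge_conf_def)
  next
    case (MRemBlue v)
    have "card (red_union k Rs) \<le> k * r"
      using U'_bound c MRemBlue by simp
    then show thesis
      using that[of "[SRemBlue v]"] app c MRemBlue by (simp add: merge_conf_def spp_io_cost_def)
  qed
qed

lemma spp_run_merge_mpp_run:
  assumes "mpp_run V E k r ms c" and "\<forall>j<k. finite (fst c j)"
  obtains sms where "spp_run V E (k * r) sms (merge_conf k c)"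
    and "spp_io_cost sms \<le> k * mpp_io_steps ms"
  using assms
proof (induction ms arbitrary: c thesis)
  case Nil
  then show ?case
    by (intro Nil.prems(1)[of "[]"])
      (auto simp: mpp_terminal_def spp_terminal_def merge_conf_def red_union_def
        spp_io_cost_def mpp_io_steps_def)
next
  case (Cons m ms)
  then have app: "mpp_applicable V E k m c" and val: "mpp_valid k r (mpp_effect m c)"
    and run: "mpp_run V E k r ms (mpp_effect m c)" by auto
  obtain seg where seg: "spp_path V E (k * r) seg (merge_conf k c) (merge_conf k (mpp_effect m c))"
    and seg_cost: "spp_io_cost seg \<le> (if mpp_is_io m then k else 0)"
    using spp_path_merge_mpp_move[OF app val] Cons.prems(3) by blast
  obtain sms where sms: "spp_run V E (k * r) sms (merge_conf k (mpp_effect m c))"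
    and sms_cost: "spp_io_cost sms \<le> k * mpp_io_steps ms"
    using Cons.IH[OF _ run finite_red_mpp_effect[OF Cons.prems(3)]] by blast
  have "spp_run V E (k * r) (seg @ sms) (merge_conf k c)"
    using seg sms by (rule spp_path_append_run)
  moreover have "spp_io_cost (seg @ sms) \<le> k * mpp_io_steps (m # ms)"
    using seg_cost sms_cost by (auto simp: spp_io_cost_def mpp_io_steps_def split: if_splits)
  ultimately show ?case
    by (rule Cons.prems(1))
qed

theorem lemma5:
  fixes V :: "'v set" and E :: "('v \<times> 'v) set" and k r L :: nat
  assumes "is_dag V E"
    and "k > 0" and "r > 0" and "L > 0"
    and "\<And>ms. spp_strategy V E (k * r) ms \<Longrightarrow> spp_io_cost ms \<ge> L"
  shows "\<And>ms. mpp_strategy V E k r ms \<Longrightarrow> real (mpp_io_steps ms) \<ge> real L / real k"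
proof -
  fix ms
  assume "mpp_strategy V E k r ms"
  then obtain sms where "spp_run V E (k * r) sms (merge_conf k ((\<lambda>_. {}), {}))"
    and cost: "spp_io_cost sms \<le> k * mpp_io_steps ms"
    unfolding mpp_strategy_def by (auto elim: spp_run_merge_mpp_run)
  then have "spp_strategy V E (k * r) sms"
    by (simp add: spp_strategy_def merge_conf_def red_union_def)
  then have "L \<le> k * mpp_io_steps ms"
    using assms(5) cost by fastforce
  then have "real L \<le> real k * real (mpp_io_steps ms)"
    by (metis of_nat_le_iff of_nat_mult)
  then show "real L / real k \<le> real (mpp_io_steps ms)"
    using \<open>k > 0\<close> by (simp add: divide_le_eq mult.commute)
qed

end
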